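(* Consider an instance of the Generalized Data Placement (GDP) problem and its associated weighted bipartite graph $H$ (both defined in the context). Then (1) given any feasible solution to GDP, there is a partition of $H$ whose edge cost is no greater than the cost of that feasible solution; and (2) given any partition of $H$, there is a feasible solution to GDP of cost at most the edge cost of that partition. In particular, the optimal value of GDP equals the minimum edge cost of a partition of $H$.
   Context: Generalized Data Placement (GDP). An instance consists of: $n$ views $V_1,\dots,V_n$, view $V_j$ having nonnegative integer size $t_j$; $l$ servers $S_1,\dots,S_l$, server $S_k$ having nonnegative integer storage capacity $s_k$; a nonnegative integer transfer cost $m_j$ for each view $V_j$; a directed acyclic graph $K=(V,E)$ on $V=\{V_1,\dots,V_n\}$ (an arc $(V_i,V_j)$ means view $V_i$ needs view $V_j$); and for each arc $(V_i,V_j)\in E$ a nonnegative integer communication cost $C_i^j$. A feasible solution assigns to each view $V_j$ a computation server $cs(V_j)\in\{S_1,\dots,S_l\}$ and a storage server $ss(V_j)\in\{S_1,\dots,S_l\}$ such that for all $k$, $\sum_{i: ss(V_i)=S_k} t_i\le s_k$. Its cost is $\sum_{(V_i,V_j)\in E:\ ss(V_j)\neq cs(V_i)} C_i^j+\sum_{i:\ cs(V_i)\neq ss(V_i)} m_i$; the goal is to minimize this cost. The graph $H$. Let $V'=\{V'_1,\dots,V'_n\}$ be a disjoint copy of $V$. $H$ is the bipartite graph with vertex set $V\cup V'$ and edge set $\{\{V_j,V'_i\}: (V_i,V_j)\in E\}\cup\{\{V_i,V'_i\}: i=1,\dots,n\}$. The weight of an edge $\{V_j,V'_i\}$ with $j\neq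 i$ is $C_i^j$; the weight of an edge $\{V_i,V'_i\}$ is $m_i$. Node $V_j$ has weight $t_j$ and node $V'_j$ has weight $0$. A partition of $H$ means an ordered partition $(P_1,\dots,P_l)$ of $V\cup V'$ into $l$ parts (equivalently a map from $V\cup V'$ to $\{1,\dots,l\}$) such that the total node weight of $P_k$ is at most $s_k$ for each $k$. Its edge cost is the total weight of edges of $H$ whose endpoints lie in different parts. *)

theory Defs
  imports Main
begin

text \<open>Conventions: views are indexed by 0..<n, servers by 0..<l.
  View sizes t, capacities s, transfer costs m, communication costs C i j
  for arcs (i,j) of the DAG E (arc (i,j): view i needs view j).\<close>

definition gdp_feasible ::
  "nat \<Rightarrow> nat \<Rightarrow> (nat \<Rightarrow> nat) \<Rightarrow> (nat \<Rightarrow> nat) \<Rightarrow> (nat \<Rightarrow> nat) \<Rightarrow> (nat \<Rightarrow> nat) \<Rightarrow> bool" where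
  "gdp_feasible n l t s cs ss \<longleftrightarrow>
     (\<forall>j<n. cs j < l \<and> ss j < l) \<and>
     (\<forall>k<l. (\<Sum>i\<in>{i. i < n \<and> ss i = k}. t i) \<le> s k)"

definition gdp_cost ::
  "nat \<Rightarrow> (nat \<times> nat) set \<Rightarrow> (nat \<Rightarrow> nat \<Rightarrow> nat) \<Rightarrow> (nat \<Rightarrow> nat)
   \<Rightarrow> (nat \<Rightarrow> nat) \<Rightarrow> (nat \<Rightarrow> nat) \<Rightarrow> nat" where
  "gdp_cost n E C m cs ss =
     (\<Sum>(i,j)\<in>{(i,j). (i,j) \<in> E \<and> ss j \<noteq> cs i}. C i j)
   + (\<Sum>i\<in>{i. i < n \<and> cs i \<noteq> ss i}. m i)"

text \<open>The graph H: vertex V_j is Inl j, vertex V'_i is Inr i.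
  Edges are written as pairs (V-side, V'-side).\<close>

definition H_vertices :: "nat \<Rightarrow> (nat + nat) set" where
  "H_vertices n = Inl ` {..<n} \<union> Inr ` {..<n}"

definition H_edges :: "nat \<Rightarrow> (nat \<times> nat) set \<Rightarrow> ((nat + nat) \<times> (nat + nat)) set" where
  "H_edges n E = {(Inl j, Inr i) | i j. (i,j) \<in> E} \<union> {(Inl i, Inr i) | i. i < n}"

definition H_edge_weight ::
  "(nat \<Rightarrow> nat \<Rightarrow> nat) \<Rightarrow> (nat \<Rightarrow> nat) \<Rightarrow> (nat + nat) \<times> (nat + nat) \<Rightarrow> nat" where
  "H_edge_weight C m e =
     (case e of (Inl j, Inr i) \<Rightarrow> (if j \<noteq> i then C i j else m i) | _ \<Rightarrow> 0)"

definition H_node_weight :: "(nat \<Rightarrow> nat) \<Rightarrow> nat + nat \<Rightarrow> nat" where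
  "H_node_weight t v = (case v of Inl j \<Rightarrow> t j | Inr _ \<Rightarrow> 0)"

definition H_partition ::
  "nat \<Rightarrow> nat \<Rightarrow> (nat \<Rightarrow> nat) \<Rightarrow> (nat \<Rightarrow> nat) \<Rightarrow> (nat + nat \<Rightarrow> nat) \<Rightarrow> bool" where
  "H_partition n l t s p \<longleftrightarrow>
     (\<forall>v\<in>H_vertices n. p v < l) \<and>
     (\<forall>k<l. (\<Sum>v\<in>{v\<in>H_vertices n. p v = k}. H_node_weight t v) \<le> s k)"

definition H_edge_cost ::
  "nat \<Rightarrow> (nat \<times> nat) set \<Rightarrow> (nat \<Rightarrow> nat \<Rightarrow> nat) \<Rightarrow> (nat \<Rightarrow> nat)
   \<Rightarrow> (nat + nat \<Rightarrow> nat) \<Rightarrow> nat" where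
  "H_edge_cost n E C m p =
     (\<Sum>e\<in>{e\<in>H_edges n E. p (fst e) \<noteq> p (snd e)}. H_edge_weight C m e)"

end

theory Submission
  imports Defs
begin

text \<open>A partition p of H is the same thing as a pair of assignments: the part of V'_i is the
  computation server of view i and the part of V_j its storage server. Under this
  correspondence the capacity constraints coincide (only the nodes V_j carry weight) and so do
  the costs: a cut edge {V_j, V'_i} with j \<noteq> i is a violated dependency, a cut edge
  {V_i, V'_i} a transferred view. Acyclicity is only needed to keep these two kinds
  of edges apart, i.e. to exclude self-loops.\<close>

lemma H_edge_cost_eq_gdp_cost:
  assumes "finite E" and no_loops: "\<And>i. (i, i) \<notin> E"
  shows "H_edge_cost n E C m p = gdp_cost n E C m (p \<circ> Inr) (p \<circ> Inl)"
proof -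
  define dep :: "nat \<times> nat \<Rightarrow> (nat + nat) \<times> (nat + nat)" where "dep = (\<lambda>(i, j). (Inl j, Inr i))"
  define own :: "nat \<Rightarrow> (nat + nat) \<times> (nat + nat)" where "own = (\<lambda>i. (Inl i, Inr i))"
  define D where "D = {(i, j). (i, j) \<in> E \<and> p (Inl j) \<noteq> p (Inr i)}"
  define T where "T = {i. i < n \<and> p (Inr i) \<noteq> p (Inl i)}"
  have cut_edges: "{e \<in> H_edges n E. p (fst e) \<noteq> p (snd e)} = dep ` D \<union> own ` T"
    unfolding H_edges_def D_def T_def dep_def own_def by auto
  have "finite D" unfolding D_def using \<open>finite E\<close> by (rule finite_subset[rotated]) auto
  have "finite T" unfolding T_def by auto
  have "dep ` D \<inter> own ` T = {}" unfolding D_def dep_def own_def using no_loops by auto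
  have inj_dep: "inj_on dep D" and inj_own: "inj_on own T"
    unfolding dep_def own_def inj_on_def by auto
  have "H_edge_cost n E C m p = sum (H_edge_weight C m) (dep ` D) + sum (H_edge_weight C m) (own ` T)"
    unfolding H_edge_cost_def cut_edges
    using \<open>finite D\<close> \<open>finite T\<close> \<open>dep ` D \<inter> own ` T = {}\<close> by (intro sum.union_disjoint) auto
  also have "sum (H_edge_weight C m) (dep ` D) = (\<Sum>(i, j)\<in>D. C i j)"
    unfolding sum.reindex[OF inj_dep]
    by (intro sum.cong) (auto simp: dep_def D_def H_edge_weight_def no_loops)
  also have "sum (H_edge_weight C m) (own ` T) = (\<Sum>i\<in>T. m i)"
    unfolding sum.reindex[OF inj_own] by (intro sum.cong) (auto simp: own_def H_edge_weight_def)
  finally show ?thesis unfolding gdp_cost_def D_def T_def by simp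
qed

lemma H_part_weight_eq:
  "(\<Sum>v\<in>{v \<in> H_vertices n. p v = k}. H_node_weight t v) = (\<Sum>i\<in>{i. i < n \<and> p (Inl i) = k}. t i)"
proof -
  have part: "{v \<in> H_vertices n. p v = k}
      = Inl ` {i. i < n \<and> p (Inl i) = k} \<union> Inr ` {i. i < n \<and> p (Inr i) = k}"
    unfolding H_vertices_def by auto
  have "(\<Sum>v\<in>{v \<in> H_vertices n. p v = k}. H_node_weight t v)
      = (\<Sum>v\<in>Inl ` {i. i < n \<and> p (Inl i) = k}. H_node_weight t v)
        + (\<Sum>v\<in>Inr ` {i. i < n \<and> p (Inr i) = k}. H_node_weight t v)"
    unfolding part by (rule sum.union_disjoint) auto
  also have "(\<Sum>v\<in>Inr ` {i. i < n \<and> p (Inr i) = k}. H_node_weight t v) = 0"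
    by (auto simp: H_node_weight_def)
  also have "(\<Sum>v\<in>Inl ` {i. i < n \<and> p (Inl i) = k}. H_node_weight t v)
      = (\<Sum>i\<in>{i. i < n \<and> p (Inl i) = k}. t i)"
    by (subst sum.reindex) (auto simp: H_node_weight_def inj_on_def)
  finally show ?thesis by simp
qed

lemma H_partition_iff_gdp_feasible:
  "H_partition n l t s p \<longleftrightarrow> gdp_feasible n l t s (p \<circ> Inr) (p \<circ> Inl)"
  unfolding H_partition_def gdp_feasible_def H_part_weight_eq by (auto simp: H_vertices_def)

lemma gdp_costs_eq_H_edge_costs:
  assumes "finite E" and "\<And>i. (i, i) \<notin> E"
  shows "{gdp_cost n E C m cs ss | cs ss. gdp_feasible n l t s cs ss}
       = {H_edge_cost n E C m p | p. H_partition n l t s p}"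
proof -
  have "gdp_cost n E C m cs ss = H_edge_cost n E C m (case_sum ss cs)"
    and "gdp_feasible n l t s cs ss \<longleftrightarrow> H_partition n l t s (case_sum ss cs)" for cs ss
    using H_edge_cost_eq_gdp_cost[OF assms, of n C m "case_sum ss cs"]
      H_partition_iff_gdp_feasible[of n l t s "case_sum ss cs"]
    by (simp_all add: comp_def)
  moreover have "H_edge_cost n E C m p = gdp_cost n E C m (p \<circ> Inr) (p \<circ> Inl)"
    and "H_partition n l t s p \<longleftrightarrow> gdp_feasible n l t s (p \<circ> Inr) (p \<circ> Inl)" for p
    using H_edge_cost_eq_gdp_cost[OF assms] H_partition_iff_gdp_feasible by blast+
  ultimately show ?thesis by blast
qed

theorem theorem2:
  fixes n l :: nat and t s m :: "nat \<Rightarrow> nat" and C :: "nat \<Rightarrow> nat \<Rightarrow> nat"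
    and E :: "(nat \<times> nat) set"
  assumes "E \<subseteq> {..<n} \<times> {..<n}"
    and "acyclic E"
  shows "(\<forall>cs ss. gdp_feasible n l t s cs ss \<longrightarrow>
            (\<exists>p. H_partition n l t s p \<and> H_edge_cost n E C m p \<le> gdp_cost n E C m cs ss))
       \<and> (\<forall>p. H_partition n l t s p \<longrightarrow>
            (\<exists>cs ss. gdp_feasible n l t s cs ss \<and> gdp_cost n E C m cs ss \<le> H_edge_cost n E C m p))
       \<and> Inf {gdp_cost n E C m cs ss | cs ss. gdp_feasible n l t s cs ss}
         = Inf {H_edge_cost n E C m p | p. H_partition n l t s p}"
proof -
  have "finite E" using assms(1) finite_subset by blast
  moreover have "(i, i) \<notin> E" for i using assms(2) by (auto simp: acyclic_def)
  ultimately have costs: "{gdp_cost n E C m cs ss | cs ss. gdp_feasible n l t s cs ss}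
       = {H_edge_cost n E C m p | p. H_partition n l t s p}"
    by (rule gdp_costs_eq_H_edge_costs)
  show ?thesis
  proof (intro conjI allI impI)
    fix cs ss assume "gdp_feasible n l t s cs ss"
    then have "gdp_cost n E C m cs ss \<in> {H_edge_cost n E C m p | p. H_partition n l t s p}"
      unfolding costs[symmetric] by blast
    then show "\<exists>p. H_partition n l t s p \<and> H_edge_cost n E C m p \<le> gdp_cost n E C m cs ss"
      by force
  next
    fix p assume "H_partition n l t s p"
    then have "H_edge_cost n E C m p \<in> {gdp_cost n E C m cs ss | cs ss. gdp_feasible n l t s cs ss}"
      unfolding costs by blast
    then show "\<exists>cs ss. gdp_feasible n l t s cs ss \<and> gdp_cost n E C m cs ss \<le> H_edge_cost n E C m p"
      by force
  qed (rule arg_cong[OF costs])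
qed

end
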